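(* Let $\eta\in\mathbb{R}\setminus\{0\}$ and let $\varepsilon',\ell,m,M>0$. There exists $\xi_0=\xi_0(|\eta|,\varepsilon',\ell,m,M)\in\mathbb{N}^*$ with the following property. Let $X\subseteq\mathbb{R}^2$ be non-empty, let $\varepsilon>0$, and let $\gamma=\bigcup_{i\in S}I_i$ be a union of segments in $\mathbb{R}^2$ such that $\gamma$ is $\varepsilon$-dense in $X$, every $I_i$ has slope of absolute value less than $M$, and every $I_i$ has length greater than $\ell$. Then for every integer $\xi\ge\xi_0$ there is a subset $\gamma'\subseteq J_{\eta,\xi}(\gamma)$ which is a union of segments, is $(\varepsilon+\varepsilon')$-dense in $\mathrm{Str}(X,(0,\eta))$, whose segments all have slopes of absolute value greater than $m$, and whose segments all have length greater than $|\eta|$.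
   Context: For $X,Y\subseteq\mathbb{R}^2$ and $\varepsilon>0$, $X$ is $\varepsilon$-dense in $Y$ if $Y\subseteq B_\varepsilon(X)$, the open $\varepsilon$-neighbourhood of $X$. For $v\in\mathbb{R}^2\setminus\{0\}$, $\mathrm{Str}(X,v)=X+[-v,v]$ (Minkowski sum with the segment from $-v$ to $v$). For $\xi\in\mathbb{N}^*$, $\phi_\xi:\mathbb{R}\to[-1,1]$ is the triangle wave $\phi_\xi(x)=(-1)^{z+1}(4\xi x-2z-1)$ for $z\in\mathbb{Z}$, $x\in[\frac{z}{2\xi},\frac{z+1}{2\xi})$, and for $\eta\ne0$, $J_{\eta,\xi}(x,y)=(x,y+\eta\phi_\xi(x))$, a homeomorphism of $\mathbb{R}^2$. *)

theory Defs
  imports "HOL-Analysis.Analysis"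
begin

type_synonym pt = "real \<times> real"

definition eps_dense :: "real \<Rightarrow> pt set \<Rightarrow> pt set \<Rightarrow> bool" where
  "eps_dense e X Y \<longleftrightarrow> Y \<subseteq> (\<Union>x\<in>X. ball x e)"

definition Str :: "pt set \<Rightarrow> pt \<Rightarrow> pt set" where
  "Str X v = {x + t *\<^sub>R v | x t. x \<in> X \<and> t \<in> {-1..1}}"

definition tri_wave :: "nat \<Rightarrow> real \<Rightarrow> real" where
  "tri_wave \<xi> x = (let z = \<lfloor>2 * real \<xi> * x\<rfloor> in
      (-1) ^ nat (\<bar>z + 1\<bar>) * (4 * real \<xi> * x - 2 * of_int z - 1))"

definition J :: "real \<Rightarrow> nat \<Rightarrow> pt \<Rightarrow> pt" where
  "J \<eta> \<xi> p = (fst p, snd p + \<eta> * tri_wave \<xi> (fst p))"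

definition seg_union :: "(pt \<times> pt) set \<Rightarrow> pt set" where
  "seg_union \<Gamma> = (\<Union>(a, b)\<in>\<Gamma>. closed_segment a b)"

text \<open>Segment [a,b] has slope of absolute value less than M (vertical segments: infinite slope).\<close>
definition slope_lt :: "real \<Rightarrow> pt \<times> pt \<Rightarrow> bool" where
  "slope_lt M s \<longleftrightarrow> (case s of (a, b) \<Rightarrow>
      fst a \<noteq> fst b \<and> \<bar>(snd b - snd a) / (fst b - fst a)\<bar> < M)"

text \<open>Segment [a,b] has slope of absolute value greater than m (vertical segments count).\<close>
definition slope_gt :: "real \<Rightarrow> pt \<times> pt \<Rightarrow> bool" where
  "slope_gt m s \<longleftrightarrow> (case s of (a, b) \<Rightarrow>
      fst a = fst b \<or> \<bar>(snd b - snd a) / (fst b - fst a)\<bar> > m)"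

definition seg_len :: "pt \<times> pt \<Rightarrow> real" where
  "seg_len s = (case s of (a, b) \<Rightarrow> dist a b)"

end

theory Submission
  imports Defs
begin

text \<open>
  The triangle wave \<open>\<phi>\<^sub>\<xi>\<close> is affine on each cell \<open>[z/(2\<xi>), (z+1)/(2\<xi>)]\<close> and runs there through
  all of \<open>[-1, 1]\<close>. Hence \<open>J\<close> maps the part of a non-vertical segment of slope \<open>k\<close> lying over a
  cell onto a segment of slope \<open>k \<plusminus> 4\<xi>\<eta>\<close> and height \<open>|k/(2\<xi>) \<plusminus> 2\<eta>| > |\<eta>|\<close> once \<open>\<xi>\<close> is large.
  Take as \<open>\<gamma>'\<close> the images of all cells lying under a segment of \<open>\<gamma>\<close>. Every segment of \<open>\<gamma>\<close> is more
  than \<open>l/(1+M)\<close> wide, so each of its points \<open>q\<close> has such a cell within horizontal distance \<open>1/\<xi>\<close>;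
  along that cell the lifted point attains every vertical offset \<open>t\<eta>\<close>, \<open>|t| \<le> 1\<close>, so
  \<open>q + t(0, \<eta>)\<close> lies within \<open>(1+M)/\<xi>\<close> of \<open>\<gamma>'\<close>.
\<close>

definition cell_pt :: "nat \<Rightarrow> int \<Rightarrow> real \<Rightarrow> real" where
  "cell_pt \<xi> z t = (of_int z + t) / (2 * real \<xi>)"

lemma tri_wave_cell:
  assumes "\<xi> > 0" "0 \<le> t" "t \<le> 1"
  shows "tri_wave \<xi> (cell_pt \<xi> z t) = (if even z then 1 - 2 * t else 2 * t - 1)"
proof (cases "t < 1")
  case True
  have "\<lfloor>2 * real \<xi> * cell_pt \<xi> z t\<rfloor> = z"
    using assms True by (simp add: cell_pt_def floor_eq_iff)
  then show ?thesis
    using assms by (simp add: tri_wave_def cell_pt_def even_nat_iff field_simps)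
next
  case False
  then have t: "t = 1" using assms by simp
  have "\<lfloor>2 * real \<xi> * cell_pt \<xi> z t\<rfloor> = z + 1"
    using assms t by (simp add: cell_pt_def)
  moreover have "4 * real \<xi> * cell_pt \<xi> z t = 2 * of_int z + 2"
    using assms t by (simp add: cell_pt_def)
  ultimately show ?thesis
    using t by (simp add: tri_wave_def even_nat_iff)
qed

lemma tri_wave_cell_onto:
  assumes "\<xi> > 0" "\<bar>y\<bar> \<le> 1"
  obtains t where "t \<in> {0..1}" "tri_wave \<xi> (cell_pt \<xi> z t) = y"
proof
  let ?t = "if even z then (1 - y) / 2 else (1 + y) / 2"
  show "?t \<in> {0..1}"
    using assms by auto
  then show "tri_wave \<xi> (cell_pt \<xi> z ?t) = y"
    using assms by (simp add: tri_wave_cell field_simps)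
qed

lemma cell_pt_affine: "cell_pt \<xi> z t = (1 - t) * cell_pt \<xi> z 0 + t * cell_pt \<xi> z 1"
  unfolding cell_pt_def by (simp add: divide_simps) (simp add: algebra_simps)

lemma cell_pt_mem_cell:
  assumes "\<xi> > 0" "t \<in> {0..1}"
  shows "cell_pt \<xi> z t \<in> {cell_pt \<xi> z 0..cell_pt \<xi> z 1}"
  using assms by (simp add: cell_pt_def divide_right_mono)

definition slope :: "pt \<Rightarrow> pt \<Rightarrow> real" where
  "slope a b = (snd b - snd a) / (fst b - fst a)"

definition graph_pt :: "pt \<Rightarrow> real \<Rightarrow> real \<Rightarrow> pt" where
  "graph_pt a k x = (x, snd a + k * (x - fst a))"

lemma closed_segment_graph_pt:
  "closed_segment (graph_pt a k x) (graph_pt a k y) = graph_pt a k ` closed_segment x y"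
proof -
  define c :: pt where "c = (0, snd a - k * fst a)"
  have graph: "graph_pt a k t = c + t *\<^sub>R (1, k)" for t
    by (simp add: graph_pt_def c_def algebra_simps)
  have lin: "linear (\<lambda>t. t *\<^sub>R (1::real, k))"
    by (rule linear_scaleR_left)
  have "closed_segment (graph_pt a k x) (graph_pt a k y) = (+) c ` closed_segment (x *\<^sub>R (1, k)) (y *\<^sub>R (1, k))"
    unfolding graph by (rule closed_segment_translation)
  also have "\<dots> = (+) c ` (\<lambda>t. t *\<^sub>R (1, k)) ` closed_segment x y"
    by (simp only: closed_segment_linear_image[OF lin])
  finally show ?thesis
    by (simp add: image_comp graph comp_def)
qed

lemma closed_segment_eq_graph:
  assumes "fst a \<noteq> fst b"
  shows "closed_segment a b = graph_pt a (slope a b) ` closed_segment (fst a) (fst b)"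
proof -
  have "a = graph_pt a (slope a b) (fst a)" "b = graph_pt a (slope a b) (fst b)"
    using assms by (simp_all add: graph_pt_def slope_def)
  then show ?thesis
    by (metis closed_segment_graph_pt)
qed

lemma dist_graph_pt: "dist (graph_pt a k x) (graph_pt a k y) \<le> \<bar>x - y\<bar> * (1 + \<bar>k\<bar>)"
proof -
  have "dist (graph_pt a k x) (graph_pt a k y) \<le> dist x y + dist (k * (x - fst a)) (k * (y - fst a))"
    unfolding graph_pt_def dist_Pair_Pair by (simp add: dist_real_def sqrt_sum_squares_le_sum_abs)
  also have "\<dots> = \<bar>x - y\<bar> + \<bar>k * (x - y)\<bar>"
    by (simp add: dist_real_def right_diff_distrib)
  also have "\<dots> = \<bar>x - y\<bar> * (1 + \<bar>k\<bar>)"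
    by (simp add: abs_mult distrib_left)
  finally show ?thesis .
qed

lemma seg_len_le_width:
  assumes "slope_lt M (a, b)"
  shows "seg_len (a, b) \<le> \<bar>fst b - fst a\<bar> * (1 + M)"
proof -
  have ab: "fst a \<noteq> fst b" "\<bar>slope a b\<bar> < M"
    using assms by (simp_all add: slope_lt_def slope_def)
  have "seg_len (a, b) = dist (graph_pt a (slope a b) (fst a)) (graph_pt a (slope a b) (fst b))"
    using ab by (simp add: seg_len_def graph_pt_def slope_def)
  also have "\<dots> \<le> \<bar>fst b - fst a\<bar> * (1 + \<bar>slope a b\<bar>)"
    using dist_graph_pt by (metis abs_minus_commute)
  also have "\<dots> \<le> \<bar>fst b - fst a\<bar> * (1 + M)"
    using ab by (simp add: mult_left_mono)
  finally show ?thesis .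
qed

definition J_graph :: "real \<Rightarrow> nat \<Rightarrow> pt \<Rightarrow> real \<Rightarrow> real \<Rightarrow> pt" where
  "J_graph \<eta> \<xi> a k x = J \<eta> \<xi> (graph_pt a k x)"

lemma J_graph_eq: "J_graph \<eta> \<xi> a k x = graph_pt a k x + tri_wave \<xi> x *\<^sub>R (0, \<eta>)"
  by (simp add: J_graph_def J_def graph_pt_def)

lemma J_graph_cell_affine:
  assumes "\<xi> > 0" "t \<in> {0..1}"
  shows "J_graph \<eta> \<xi> a k (cell_pt \<xi> z t) =
    (1 - t) *\<^sub>R J_graph \<eta> \<xi> a k (cell_pt \<xi> z 0) + t *\<^sub>R J_graph \<eta> \<xi> a k (cell_pt \<xi> z 1)"
proof -
  have tri: "tri_wave \<xi> (cell_pt \<xi> z t) = (1 - t) * tri_wave \<xi> (cell_pt \<xi> z 0) + t * tri_wave \<xi> (cell_pt \<xi> z 1)"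
    using assms by (simp add: tri_wave_cell algebra_simps)
  have x: "cell_pt \<xi> z t = (1 - t) * cell_pt \<xi> z 0 + t * cell_pt \<xi> z 1"
    by (rule cell_pt_affine)
  show ?thesis
    unfolding J_graph_eq graph_pt_def by (simp only: tri) (simp add: x algebra_simps)
qed

lemma closed_segment_J_graph_cell:
  assumes "\<xi> > 0"
  shows "closed_segment (J_graph \<eta> \<xi> a k (cell_pt \<xi> z 0)) (J_graph \<eta> \<xi> a k (cell_pt \<xi> z 1)) =
    (\<lambda>t. J_graph \<eta> \<xi> a k (cell_pt \<xi> z t)) ` {0..1}"
  unfolding closed_segment_image_interval
  by (rule image_cong[OF refl]) (rule J_graph_cell_affine[OF assms, symmetric])

lemma J_graph_cell_slope_length:
  fixes a :: pt and z :: int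
  assumes "\<xi> > 0" "\<bar>k\<bar> < M" "m + M < 4 * real \<xi> * \<bar>\<eta>\<bar>" "M \<le> 2 * real \<xi> * \<bar>\<eta>\<bar>"
  defines "P \<equiv> J_graph \<eta> \<xi> a k (cell_pt \<xi> z 0)" and "Q \<equiv> J_graph \<eta> \<xi> a k (cell_pt \<xi> z 1)"
  shows "slope_gt m (P, Q) \<and> \<bar>\<eta>\<bar> < seg_len (P, Q)"
proof -
  define \<sigma> :: real where "\<sigma> = (if even z then 1 else -1)"
  have width: "cell_pt \<xi> z 1 - cell_pt \<xi> z 0 = 1 / (2 * real \<xi>)"
    by (simp add: cell_pt_def flip: diff_divide_distrib)
  have "tri_wave \<xi> (cell_pt \<xi> z 0) = \<sigma>" "tri_wave \<xi> (cell_pt \<xi> z 1) = - \<sigma>"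
    using assms(1) by (simp_all add: tri_wave_cell \<sigma>_def)
  then have "snd Q - snd P = k * (cell_pt \<xi> z 1 - cell_pt \<xi> z 0) - 2 * \<sigma> * \<eta>"
    unfolding P_def Q_def J_graph_eq graph_pt_def by (simp add: algebra_simps)
  then have dy: "snd Q - snd P = k / (2 * real \<xi>) - 2 * \<sigma> * \<eta>"
    by (simp add: width)
  have dx: "fst Q - fst P = 1 / (2 * real \<xi>)"
    using width by (simp add: P_def Q_def J_graph_eq graph_pt_def)
  have abs_\<sigma>: "\<bar>\<sigma>\<bar> = 1"
    by (simp add: \<sigma>_def)
  have "(snd Q - snd P) / (fst Q - fst P) = k - 4 * real \<xi> * \<sigma> * \<eta>"
    using assms(1) unfolding dx dy by (simp add: field_simps)
  moreover have "\<bar>4 * real \<xi> * \<sigma> * \<eta>\<bar> = 4 * real \<xi> * \<bar>\<eta>\<bar>"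
    using abs_\<sigma> by (simp add: abs_mult)
  ultimately have "m < \<bar>(snd Q - snd P) / (fst Q - fst P)\<bar>"
    using assms(2,3) by linarith
  then have "slope_gt m (P, Q)"
    by (simp add: slope_gt_def)
  have "\<bar>k / (2 * real \<xi>)\<bar> < M / (2 * real \<xi>)"
    using assms(1,2) by (simp add: divide_strict_right_mono)
  moreover have "M / (2 * real \<xi>) \<le> \<bar>\<eta>\<bar>"
    using assms(1,4) by (simp add: pos_divide_le_eq mult.commute)
  moreover have "\<bar>2 * \<sigma> * \<eta>\<bar> = 2 * \<bar>\<eta>\<bar>"
    using abs_\<sigma> by (simp add: abs_mult)
  ultimately have "\<bar>\<eta>\<bar> < \<bar>snd Q - snd P\<bar>"
    unfolding dy by linarith
  also have "\<dots> \<le> seg_len (P, Q)"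
    using dist_snd_le[of Q P] by (simp add: seg_len_def dist_real_def dist_commute)
  finally show ?thesis
    using \<open>slope_gt m (P, Q)\<close> by simp
qed

lemma exists_unit_interval_near:
  fixes y lo hi :: real
  assumes "lo \<le> y" "y \<le> hi" "3 \<le> hi - lo"
  obtains z :: int where "lo \<le> z" "z + 1 \<le> hi" "y - 2 \<le> z" "z + 1 \<le> y + 2"
proof -
  define c where "c = \<lceil>y\<rceil>"
  have c: "y \<le> c" "c < y + 1"
    unfolding c_def by linarith+
  show ?thesis
  proof (cases "c + 1 \<le> hi")
    case True
    then show ?thesis using that[of c] c assms by linarith
  next
    case False
    then show ?thesis using that[of "c - 2"] c assms by linarith
  qed
qed

lemma exists_cell_near:
  assumes "\<xi> > 0" "x \<in> closed_segment u v" "3 \<le> 2 * real \<xi> * \<bar>v - u\<bar>"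
  obtains z where "{cell_pt \<xi> z 0..cell_pt \<xi> z 1} \<subseteq> closed_segment u v"
    "\<And>t. t \<in> {0..1} \<Longrightarrow> \<bar>cell_pt \<xi> z t - x\<bar> \<le> 1 / real \<xi>"
proof -
  define lo hi where "lo = min u v" and "hi = max u v"
  have seg: "closed_segment u v = {lo..hi}" and "\<bar>v - u\<bar> = hi - lo"
    by (auto simp: lo_def hi_def closed_segment_eq_real_ivl)
  then have "2 * real \<xi> * lo \<le> 2 * real \<xi> * x" "2 * real \<xi> * x \<le> 2 * real \<xi> * hi"
    "3 \<le> 2 * real \<xi> * hi - 2 * real \<xi> * lo"
    using assms by (auto simp: right_diff_distrib)
  then obtain z :: int where z: "2 * real \<xi> * lo \<le> z" "z + 1 \<le> 2 * real \<xi> * hi"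
    "2 * real \<xi> * x - 2 \<le> z" "z + 1 \<le> 2 * real \<xi> * x + 2"
    by (rule exists_unit_interval_near)
  show ?thesis
  proof
    show "{cell_pt \<xi> z 0..cell_pt \<xi> z 1} \<subseteq> closed_segment u v"
      using z(1,2) assms(1) by (auto simp: seg cell_pt_def field_simps)
  next
    fix t :: real
    assume "t \<in> {0..1}"
    then have "\<bar>z + t - 2 * real \<xi> * x\<bar> \<le> 2"
      using z(3,4) by auto
    moreover have "cell_pt \<xi> z t - x = (z + t - 2 * real \<xi> * x) / (2 * real \<xi>)"
      using assms(1) by (simp add: cell_pt_def field_simps)
    ultimately show "\<bar>cell_pt \<xi> z t - x\<bar> \<le> 1 / real \<xi>"
      using assms(1) by (simp add: pos_divide_le_eq)
  qed
qed

definition J_cells :: "real \<Rightarrow> nat \<Rightarrow> (pt \<times> pt) set \<Rightarrow> (pt \<times> pt) set" where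
  "J_cells \<eta> \<xi> \<Gamma> =
    {(J_graph \<eta> \<xi> a (slope a b) (cell_pt \<xi> z 0), J_graph \<eta> \<xi> a (slope a b) (cell_pt \<xi> z 1)) | a b z.
       (a, b) \<in> \<Gamma> \<and> {cell_pt \<xi> z 0..cell_pt \<xi> z 1} \<subseteq> closed_segment (fst a) (fst b)}"

lemma seg_union_J_cells_subset:
  assumes "\<xi> > 0" "\<forall>(a, b)\<in>\<Gamma>. fst a \<noteq> fst b"
  shows "seg_union (J_cells \<eta> \<xi> \<Gamma>) \<subseteq> J \<eta> \<xi> ` seg_union \<Gamma>"
proof
  fix p
  assume "p \<in> seg_union (J_cells \<eta> \<xi> \<Gamma>)"
  then obtain a b z where ab: "(a, b) \<in> \<Gamma>"
    and cell: "{cell_pt \<xi> z 0..cell_pt \<xi> z 1} \<subseteq> closed_segment (fst a) (fst b)"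
    and p: "p \<in> closed_segment (J_graph \<eta> \<xi> a (slope a b) (cell_pt \<xi> z 0))
                                (J_graph \<eta> \<xi> a (slope a b) (cell_pt \<xi> z 1))"
    by (auto simp: seg_union_def J_cells_def)
  then obtain t where t: "t \<in> {0..1}" and "p = J_graph \<eta> \<xi> a (slope a b) (cell_pt \<xi> z t)"
    using closed_segment_J_graph_cell[OF assms(1)] by blast
  then have "p = J \<eta> \<xi> (graph_pt a (slope a b) (cell_pt \<xi> z t))"
    by (simp add: J_graph_def)
  moreover have "graph_pt a (slope a b) (cell_pt \<xi> z t) \<in> closed_segment a b"
  proof -
    have "fst a \<noteq> fst b"
      using ab assms(2) by auto
    moreover have "cell_pt \<xi> z t \<in> closed_segment (fst a) (fst b)"
      using cell cell_pt_mem_cell[OF assms(1) t] by blast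
    ultimately show ?thesis
      by (simp add: closed_segment_eq_graph)
  qed
  ultimately show "p \<in> J \<eta> \<xi> ` seg_union \<Gamma>"
    using ab by (auto simp: seg_union_def)
qed

lemma J_cells_slope_length:
  assumes "\<xi> > 0" "\<forall>s\<in>\<Gamma>. slope_lt M s" "m + M < 4 * real \<xi> * \<bar>\<eta>\<bar>" "M \<le> 2 * real \<xi> * \<bar>\<eta>\<bar>"
    "s \<in> J_cells \<eta> \<xi> \<Gamma>"
  shows "slope_gt m s \<and> \<bar>\<eta>\<bar> < seg_len s"
proof -
  obtain a b z where "(a, b) \<in> \<Gamma>"
    and s: "s = (J_graph \<eta> \<xi> a (slope a b) (cell_pt \<xi> z 0), J_graph \<eta> \<xi> a (slope a b) (cell_pt \<xi> z 1))"
    using assms(5) by (auto simp: J_cells_def)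
  then have "\<bar>slope a b\<bar> < M"
    using assms(2) by (auto simp: slope_lt_def slope_def)
  then show ?thesis
    unfolding s using J_graph_cell_slope_length assms(1,3,4) by blast
qed

lemma J_graph_cell_mem_seg_union_J_cells:
  assumes "\<xi> > 0" "(a, b) \<in> \<Gamma>" "{cell_pt \<xi> z 0..cell_pt \<xi> z 1} \<subseteq> closed_segment (fst a) (fst b)"
    "t \<in> {0..1}"
  shows "J_graph \<eta> \<xi> a (slope a b) (cell_pt \<xi> z t) \<in> seg_union (J_cells \<eta> \<xi> \<Gamma>)"
proof -
  have "(J_graph \<eta> \<xi> a (slope a b) (cell_pt \<xi> z 0), J_graph \<eta> \<xi> a (slope a b) (cell_pt \<xi> z 1))
      \<in> J_cells \<eta> \<xi> \<Gamma>"
    unfolding J_cells_def using assms(2,3) by blast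
  moreover have "J_graph \<eta> \<xi> a (slope a b) (cell_pt \<xi> z t) \<in>
      closed_segment (J_graph \<eta> \<xi> a (slope a b) (cell_pt \<xi> z 0)) (J_graph \<eta> \<xi> a (slope a b) (cell_pt \<xi> z 1))"
    unfolding closed_segment_J_graph_cell[OF assms(1)] using assms(4) by blast
  ultimately show ?thesis
    by (auto simp: seg_union_def)
qed

lemma three_cells_fit_under_segment:
  assumes "slope_lt M (a, b)" "l < seg_len (a, b)" "3 * (1 + M) < 2 * real \<xi> * l"
  shows "3 \<le> 2 * real \<xi> * \<bar>fst b - fst a\<bar>"
proof -
  have "\<bar>slope a b\<bar> < M"
    using assms(1) by (simp add: slope_lt_def slope_def)
  then have pos: "0 < 1 + M"
    using abs_ge_zero[of "slope a b"] by linarith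
  have "0 \<le> real \<xi>"
    by simp
  then have "2 * real \<xi> * l \<le> 2 * real \<xi> * (\<bar>fst b - fst a\<bar> * (1 + M))"
    using assms(2) seg_len_le_width[OF assms(1)] by (intro mult_left_mono) auto
  then have "3 * (1 + M) < (2 * real \<xi> * \<bar>fst b - fst a\<bar>) * (1 + M)"
    using assms(3) by (simp add: mult.assoc)
  then have "3 < 2 * real \<xi> * \<bar>fst b - fst a\<bar>"
    by (simp only: mult_less_cancel_right_pos[OF pos])
  then show ?thesis
    by simp
qed

lemma eps_dense_Str_J_cells:
  assumes "\<xi> > 0" "\<forall>s\<in>\<Gamma>. slope_lt M s \<and> l < seg_len s" "eps_dense e (seg_union \<Gamma>) X"
    "3 * (1 + M) < 2 * real \<xi> * l" "(1 + M) / real \<xi> \<le> e'"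
  shows "eps_dense (e + e') (seg_union (J_cells \<eta> \<xi> \<Gamma>)) (Str X (0, \<eta>))"
  unfolding eps_dense_def
proof
  fix p
  assume "p \<in> Str X (0, \<eta>)"
  then obtain x y where p: "p = x + y *\<^sub>R (0, \<eta>)" and "x \<in> X" "\<bar>y\<bar> \<le> 1"
    by (auto simp: Str_def)
  then obtain q where q: "q \<in> seg_union \<Gamma>" "dist q x < e"
    using assms(3) by (auto simp: eps_dense_def)
  then obtain a b where ab: "(a, b) \<in> \<Gamma>" "q \<in> closed_segment a b"
    by (auto simp: seg_union_def)
  define k where "k = slope a b"
  have ab_slope: "fst a \<noteq> fst b" "\<bar>k\<bar> < M"
    using ab(1) assms(2) by (auto simp: slope_lt_def slope_def k_def)
  then obtain x0 where x0: "x0 \<in> closed_segment (fst a) (fst b)" "q = graph_pt a k x0"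
    using ab(2) by (auto simp: closed_segment_eq_graph k_def)
  have "3 \<le> 2 * real \<xi> * \<bar>fst b - fst a\<bar>"
    using three_cells_fit_under_segment ab(1) assms(2,4) by blast
  then obtain z where cell: "{cell_pt \<xi> z 0..cell_pt \<xi> z 1} \<subseteq> closed_segment (fst a) (fst b)"
    and near: "\<And>t. t \<in> {0..1} \<Longrightarrow> \<bar>cell_pt \<xi> z t - x0\<bar> \<le> 1 / real \<xi>"
    using exists_cell_near[OF assms(1) x0(1)] by blast
  obtain t where t: "t \<in> {0..1}" "tri_wave \<xi> (cell_pt \<xi> z t) = y"
    using tri_wave_cell_onto[OF assms(1) \<open>\<bar>y\<bar> \<le> 1\<close>] by blast
  define r where "r = J_graph \<eta> \<xi> a k (cell_pt \<xi> z t)"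
  have "r \<in> seg_union (J_cells \<eta> \<xi> \<Gamma>)"
    unfolding r_def k_def using J_graph_cell_mem_seg_union_J_cells assms(1) ab(1) cell t(1) by blast
  moreover have "dist r p < e + e'"
  proof -
    have "dist r p = dist (graph_pt a k (cell_pt \<xi> z t)) x"
      by (simp add: r_def p J_graph_eq t(2) dist_norm)
    also have "\<dots> \<le> dist (graph_pt a k (cell_pt \<xi> z t)) (graph_pt a k x0) + dist q x"
      using dist_triangle x0(2) by blast
    also have "dist (graph_pt a k (cell_pt \<xi> z t)) (graph_pt a k x0) \<le> 1 / real \<xi> * (1 + M)"
    proof -
      have "\<bar>cell_pt \<xi> z t - x0\<bar> * (1 + \<bar>k\<bar>) \<le> 1 / real \<xi> * (1 + M)"
        using near[OF t(1)] ab_slope(2) by (intro mult_mono) auto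
      then show ?thesis
        using dist_graph_pt order_trans by blast
    qed
    also have "\<dots> \<le> e'"
      using assms(5) by simp
    finally show ?thesis
      using q(2) by simp
  qed
  ultimately show "p \<in> (\<Union>r\<in>seg_union (J_cells \<eta> \<xi> \<Gamma>). ball r (e + e'))"
    by auto
qed

lemma eventually_gt_real_sequentially: "\<forall>\<^sub>F n in sequentially. c < real n"
proof -
  obtain N :: nat where "c < real N"
    using reals_Archimedean2 by blast
  then show ?thesis
    by (auto intro: eventually_sequentiallyI[of N] elim: less_le_trans)
qed

lemma eventually_mesh_conditions:
  assumes "l > 0" "e' > 0" "\<eta> \<noteq> 0"
  shows "\<forall>\<^sub>F \<xi> in sequentially. 0 < \<xi> \<and> 3 * (1 + M) < 2 * real \<xi> * l \<and> (1 + M) / real \<xi> \<le> e' \<and>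
    m + M < 4 * real \<xi> * \<bar>\<eta>\<bar> \<and> M \<le> 2 * real \<xi> * \<bar>\<eta>\<bar>"
  using eventually_gt_real_sequentially[of
      "Max {0, 3 * (1 + M) / (2 * l), (1 + M) / e', (m + M) / (4 * \<bar>\<eta>\<bar>), M / (2 * \<bar>\<eta>\<bar>)}"]
proof eventually_elim
  case (elim \<xi>)
  then have "\<xi> > 0" "3 * (1 + M) / (2 * l) < real \<xi>" "(1 + M) / e' < real \<xi>"
    "(m + M) / (4 * \<bar>\<eta>\<bar>) < real \<xi>" "M / (2 * \<bar>\<eta>\<bar>) < real \<xi>"
    by simp_all
  then show ?case
    using assms by (simp add: pos_divide_less_eq pos_divide_le_eq mult_ac)
qed

lemma J_cells_properties:
  assumes "0 < \<xi>" "3 * (1 + M) < 2 * real \<xi> * l" "(1 + M) / real \<xi> \<le> e'"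
    "m + M < 4 * real \<xi> * \<bar>\<eta>\<bar>" "M \<le> 2 * real \<xi> * \<bar>\<eta>\<bar>"
    and \<Gamma>: "\<forall>s\<in>\<Gamma>. slope_lt M s \<and> l < seg_len s" "eps_dense e (seg_union \<Gamma>) X"
  shows "seg_union (J_cells \<eta> \<xi> \<Gamma>) \<subseteq> J \<eta> \<xi> ` seg_union \<Gamma> \<and>
    eps_dense (e + e') (seg_union (J_cells \<eta> \<xi> \<Gamma>)) (Str X (0, \<eta>)) \<and>
    (\<forall>s\<in>J_cells \<eta> \<xi> \<Gamma>. slope_gt m s \<and> \<bar>\<eta>\<bar> < seg_len s)"
proof (intro conjI)
  have "\<forall>(a, b)\<in>\<Gamma>. fst a \<noteq> fst b"
    using \<Gamma>(1) by (auto simp: slope_lt_def)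
  then show "seg_union (J_cells \<eta> \<xi> \<Gamma>) \<subseteq> J \<eta> \<xi> ` seg_union \<Gamma>"
    using seg_union_J_cells_subset[OF assms(1)] by blast
  show "eps_dense (e + e') (seg_union (J_cells \<eta> \<xi> \<Gamma>)) (Str X (0, \<eta>))"
    using eps_dense_Str_J_cells[OF assms(1) \<Gamma> assms(2,3)] .
  show "\<forall>s\<in>J_cells \<eta> \<xi> \<Gamma>. slope_gt m s \<and> \<bar>\<eta>\<bar> < seg_len s"
    using J_cells_slope_length[OF assms(1) _ assms(4,5)] \<Gamma>(1) by blast
qed

theorem mainTheorem11:
  fixes \<eta> e' l m M :: real
  assumes "\<eta> \<noteq> 0" and "e' > 0" and "l > 0" and "m > 0" and "M > 0"
  shows "\<exists>\<xi>\<^sub>0::nat. \<xi>\<^sub>0 \<ge> 1 \<and>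
    (\<forall>(X::pt set) (e::real) (\<Gamma>::(pt \<times> pt) set).
       X \<noteq> {} \<and> e > 0 \<and> eps_dense e (seg_union \<Gamma>) X \<and>
       (\<forall>s\<in>\<Gamma>. slope_lt M s \<and> seg_len s > l) \<longrightarrow>
       (\<forall>\<xi>::nat. \<xi> \<ge> \<xi>\<^sub>0 \<longrightarrow>
          (\<exists>\<Gamma>'::(pt \<times> pt) set.
             seg_union \<Gamma>' \<subseteq> J \<eta> \<xi> ` seg_union \<Gamma> \<and>
             eps_dense (e + e') (seg_union \<Gamma>') (Str X (0, \<eta>)) \<and>
             (\<forall>s\<in>\<Gamma>'. slope_gt m s \<and> seg_len s > \<bar>\<eta>\<bar>))))"
proof -
  obtain N where N: "\<And>\<xi>. \<xi> \<ge> N \<Longrightarrow> 0 < \<xi> \<and> 3 * (1 + M) < 2 * real \<xi> * l \<and> (1 + M) / real \<xi> \<le> e' \<and>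
      m + M < 4 * real \<xi> * \<bar>\<eta>\<bar> \<and> M \<le> 2 * real \<xi> * \<bar>\<eta>\<bar>"
    using eventually_mesh_conditions[OF assms(3,2,1)] unfolding eventually_sequentially by blast
  show ?thesis
  proof (intro exI[of _ "max 1 N"] conjI allI impI, goal_cases)
    case (2 X e \<Gamma> \<xi>)
    then show ?case
      using N[of \<xi>] by (intro exI[of _ "J_cells \<eta> \<xi> \<Gamma>"] J_cells_properties) auto
  qed simp
qed

end
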